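(* Let $\{A_i\}_{i\in I}$ be a family of Banach lattice algebras, $1\le p\le\infty$, and let $\ell_p(A_i)$ be their $\ell_p$-sum with coordinatewise order and product. Then \[BP(\ell_p(A_i))=\prod_{i\in I}BP(A_i),\quad BP_l(\ell_p(A_i))=\prod_{i\in I}BP_l(A_i),\quad BP_r(\ell_p(A_i))=\prod_{i\in I}BP_r(A_i)\] (intersected with $\ell_p(A_i)$, i.e. an element $(p_i)\in\ell_p(A_i)$ lies in the left-hand set iff each $p_i$ lies in the corresponding set for $A_i$). If each $A_i$ has an identity, then $OI(\ell_\infty(A_i))=\prod_{i\in I}OI(A_i)$.
   Context: A Banach lattice algebra is a real Banach lattice $A$ with an associative bilinear product making it a Banach algebra such that $xy\ge0$ whenever $x,y\ge0$; identity $e$ means a multiplicative identity with $\|e\|=1$. $L_a(x)=ax$, $R_a(x)=xa$. A band projection on a Banach lattice $X$ is an operator $P$ with $P^2=P$, $0\le P\le I_X$. $BP(A)=\{a\in A_+: L_aR_a\text{ is a band projection}\}$, $BP_l(A)=\{a\in A_+: L_a\text{ is a band projection}\}$, $BP_r(A)=\{a\in A_+: R_a\text{ is a band projection}\}$, $OI(A)=\{p: p^2=p,\ 0\le p\le e\}$. The $\ell_p$-sum $\ell_p(A_i)$ consists of families $(x_i)$ with $(\|x_i\|)\in\ell_p(I)$, normed by $\|(\|x_i\|)\|_p$; it is a Banach lattice algebra. *)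

theory Defs
  imports "HOL-Analysis.Analysis"
begin

text \<open>A (real) Banach lattice algebra, given concretely on a carrier set inside an
ambient type, so that a family of possibly different algebras can be indexed by i.\<close>

record 'a bla =
  bcar  :: "'a set"
  bzero :: 'a
  badd  :: "'a \<Rightarrow> 'a \<Rightarrow> 'a"
  bneg  :: "'a \<Rightarrow> 'a"
  bsmul :: "real \<Rightarrow> 'a \<Rightarrow> 'a"
  ble   :: "'a \<Rightarrow> 'a \<Rightarrow> bool"
  bmul  :: "'a \<Rightarrow> 'a \<Rightarrow> 'a"
  bnorm :: "'a \<Rightarrow> real"

definition is_sup :: "'a bla \<Rightarrow> 'a \<Rightarrow> 'a \<Rightarrow> 'a \<Rightarrow> bool" where
  "is_sup A x y s \<longleftrightarrow> s \<in> bcar A \<and> ble A x s \<and> ble A y s \<and>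
     (\<forall>z\<in>bcar A. ble A x z \<and> ble A y z \<longrightarrow> ble A s z)"

definition babs :: "'a bla \<Rightarrow> 'a \<Rightarrow> 'a" where
  "babs A x = (THE s. is_sup A x (bneg A x) s)"

definition banach_lattice_algebra :: "'a bla \<Rightarrow> bool" where
  "banach_lattice_algebra A \<longleftrightarrow>
    \<comment> \<open>closure\<close>
    bzero A \<in> bcar A \<and>
    (\<forall>x\<in>bcar A. \<forall>y\<in>bcar A. badd A x y \<in> bcar A \<and> bmul A x y \<in> bcar A) \<and>
    (\<forall>x\<in>bcar A. bneg A x \<in> bcar A \<and> (\<forall>c. bsmul A c x \<in> bcar A)) \<and>
    \<comment> \<open>real vector space\<close>
    (\<forall>x\<in>bcar A. \<forall>y\<in>bcar A. \<forall>z\<in>bcar A. badd A (badd A x y) z = badd A x (badd A y z)) \<and>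
    (\<forall>x\<in>bcar A. \<forall>y\<in>bcar A. badd A x y = badd A y x) \<and>
    (\<forall>x\<in>bcar A. badd A (bzero A) x = x \<and> badd A (bneg A x) x = bzero A) \<and>
    (\<forall>x\<in>bcar A. \<forall>y\<in>bcar A. \<forall>c. bsmul A c (badd A x y) = badd A (bsmul A c x) (bsmul A c y)) \<and>
    (\<forall>x\<in>bcar A. \<forall>a b. bsmul A (a + b) x = badd A (bsmul A a x) (bsmul A b x)) \<and>
    (\<forall>x\<in>bcar A. \<forall>a b. bsmul A (a * b) x = bsmul A a (bsmul A b x)) \<and>
    (\<forall>x\<in>bcar A. bsmul A 1 x = x) \<and>
    \<comment> \<open>ordered vector space\<close>
    (\<forall>x\<in>bcar A. ble A x x) \<and>
    (\<forall>x\<in>bcar A. \<forall>y\<in>bcar A. ble A x y \<and> ble A y x \<longrightarrow> x = y) \<and>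
    (\<forall>x\<in>bcar A. \<forall>y\<in>bcar A. \<forall>z\<in>bcar A. ble A x y \<and> ble A y z \<longrightarrow> ble A x z) \<and>
    (\<forall>x\<in>bcar A. \<forall>y\<in>bcar A. \<forall>z\<in>bcar A. ble A x y \<longrightarrow> ble A (badd A x z) (badd A y z)) \<and>
    (\<forall>x\<in>bcar A. \<forall>y\<in>bcar A. \<forall>c::real. ble A x y \<and> 0 \<le> c \<longrightarrow> ble A (bsmul A c x) (bsmul A c y)) \<and>
    \<comment> \<open>vector lattice\<close>
    (\<forall>x\<in>bcar A. \<forall>y\<in>bcar A. \<exists>s. is_sup A x y s) \<and>
    \<comment> \<open>norm\<close>
    (\<forall>x\<in>bcar A. 0 \<le> bnorm A x \<and> (bnorm A x = 0 \<longleftrightarrow> x = bzero A)) \<and>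
    (\<forall>x\<in>bcar A. \<forall>y\<in>bcar A. bnorm A (badd A x y) \<le> bnorm A x + bnorm A y) \<and>
    (\<forall>x\<in>bcar A. \<forall>c. bnorm A (bsmul A c x) = \<bar>c\<bar> * bnorm A x) \<and>
    \<comment> \<open>lattice norm\<close>
    (\<forall>x\<in>bcar A. \<forall>y\<in>bcar A. ble A (babs A x) (babs A y) \<longrightarrow> bnorm A x \<le> bnorm A y) \<and>
    \<comment> \<open>completeness\<close>
    (\<forall>X. (\<forall>n. X n \<in> bcar A) \<and>
         (\<forall>e>0. \<exists>N. \<forall>m\<ge>N. \<forall>n\<ge>N. bnorm A (badd A (X m) (bneg A (X n))) < e) \<longrightarrow>
         (\<exists>L\<in>bcar A. (\<lambda>n. bnorm A (badd A (X n) (bneg A L))) \<longlonglongrightarrow> 0)) \<and>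
    \<comment> \<open>Banach algebra\<close>
    (\<forall>x\<in>bcar A. \<forall>y\<in>bcar A. \<forall>z\<in>bcar A. bmul A (bmul A x y) z = bmul A x (bmul A y z)) \<and>
    (\<forall>x\<in>bcar A. \<forall>y\<in>bcar A. \<forall>z\<in>bcar A.
        bmul A x (badd A y z) = badd A (bmul A x y) (bmul A x z) \<and>
        bmul A (badd A x y) z = badd A (bmul A x z) (bmul A y z)) \<and>
    (\<forall>x\<in>bcar A. \<forall>y\<in>bcar A. \<forall>c. bmul A (bsmul A c x) y = bsmul A c (bmul A x y) \<and>
        bmul A x (bsmul A c y) = bsmul A c (bmul A x y)) \<and>
    (\<forall>x\<in>bcar A. \<forall>y\<in>bcar A. bnorm A (bmul A x y) \<le> bnorm A x * bnorm A y) \<and>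
    \<comment> \<open>positivity of the product\<close>
    (\<forall>x\<in>bcar A. \<forall>y\<in>bcar A. ble A (bzero A) x \<and> ble A (bzero A) y \<longrightarrow> ble A (bzero A) (bmul A x y))"

definition is_identity :: "'a bla \<Rightarrow> 'a \<Rightarrow> bool" where
  "is_identity A e \<longleftrightarrow> e \<in> bcar A \<and> (\<forall>x\<in>bcar A. bmul A e x = x \<and> bmul A x e = x)"

definition has_identity :: "'a bla \<Rightarrow> bool" where
  "has_identity A \<longleftrightarrow> (\<exists>e. is_identity A e \<and> bnorm A e = 1)"

definition bla_one :: "'a bla \<Rightarrow> 'a" where
  "bla_one A = (THE e. is_identity A e)"

definition band_projection :: "'a bla \<Rightarrow> ('a \<Rightarrow> 'a) \<Rightarrow> bool" where
  "band_projection A P \<longleftrightarrow>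
     (\<forall>x\<in>bcar A. P x \<in> bcar A) \<and>
     (\<forall>x\<in>bcar A. \<forall>y\<in>bcar A. P (badd A x y) = badd A (P x) (P y)) \<and>
     (\<forall>x\<in>bcar A. \<forall>c. P (bsmul A c x) = bsmul A c (P x)) \<and>
     (\<forall>x\<in>bcar A. P (P x) = P x) \<and>
     (\<forall>x\<in>bcar A. ble A (bzero A) x \<longrightarrow> ble A (bzero A) (P x) \<and> ble A (P x) x)"

definition Lmul :: "'a bla \<Rightarrow> 'a \<Rightarrow> 'a \<Rightarrow> 'a" where
  "Lmul A a = (\<lambda>x. bmul A a x)"

definition Rmul :: "'a bla \<Rightarrow> 'a \<Rightarrow> 'a \<Rightarrow> 'a" where
  "Rmul A a = (\<lambda>x. bmul A x a)"

definition positives :: "'a bla \<Rightarrow> 'a set" where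
  "positives A = {a \<in> bcar A. ble A (bzero A) a}"

definition BP :: "'a bla \<Rightarrow> 'a set" where
  "BP A = {a \<in> positives A. band_projection A (Lmul A a \<circ> Rmul A a)}"

definition BPl :: "'a bla \<Rightarrow> 'a set" where
  "BPl A = {a \<in> positives A. band_projection A (Lmul A a)}"

definition BPr :: "'a bla \<Rightarrow> 'a set" where
  "BPr A = {a \<in> positives A. band_projection A (Rmul A a)}"

definition OI :: "'a bla \<Rightarrow> 'a set" where
  "OI A = {q \<in> bcar A. bmul A q q = q \<and> ble A (bzero A) q \<and> ble A q (bla_one A)}"

text \<open>Elements are families indexed by I
(extensional: value undefined outside I); order and product are coordinatewise.\<close>

definition lp_carrier :: "ennreal \<Rightarrow> 'i set \<Rightarrow> ('i \<Rightarrow> 'a bla) \<Rightarrow> ('i \<Rightarrow> 'a) set" where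
  "lp_carrier p I A = {x. (\<forall>i\<in>I. x i \<in> bcar (A i)) \<and> (\<forall>i. i \<notin> I \<longrightarrow> x i = undefined) \<and>
      (if p = \<infinity> then bdd_above ((\<lambda>i. bnorm (A i) (x i)) ` I)
       else (\<lambda>i. bnorm (A i) (x i) powr enn2real p) summable_on I)}"

definition lp_norm :: "ennreal \<Rightarrow> 'i set \<Rightarrow> ('i \<Rightarrow> 'a bla) \<Rightarrow> ('i \<Rightarrow> 'a) \<Rightarrow> real" where
  "lp_norm p I A x =
     (if p = \<infinity> then (if I = {} then 0 else (SUP i\<in>I. bnorm (A i) (x i)))
      else (\<Sum>\<^sub>\<infinity>i\<in>I. bnorm (A i) (x i) powr enn2real p) powr (1 / enn2real p))"

definition lp_sum :: "ennreal \<Rightarrow> 'i set \<Rightarrow> ('i \<Rightarrow> 'a bla) \<Rightarrow> ('i \<Rightarrow> 'a) bla" where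
  "lp_sum p I A =
    \<lparr> bcar = lp_carrier p I A,
      bzero = (\<lambda>i. if i \<in> I then bzero (A i) else undefined),
      badd = (\<lambda>x y i. if i \<in> I then badd (A i) (x i) (y i) else undefined),
      bneg = (\<lambda>x i. if i \<in> I then bneg (A i) (x i) else undefined),
      bsmul = (\<lambda>c x i. if i \<in> I then bsmul (A i) c (x i) else undefined),
      ble = (\<lambda>x y. \<forall>i\<in>I. ble (A i) (x i) (y i)),
      bmul = (\<lambda>x y i. if i \<in> I then bmul (A i) (x i) (y i) else undefined),
      bnorm = lp_norm p I A \<rparr>"

end

theory Submission
  imports Defs
begin

text \<open>Order and product of \<open>\<ell>\<^sub>p(A\<^sub>i)\<close> are coordinatewise, hence so are \<open>L\<^sub>a\<close>, \<open>R\<^sub>a\<close> and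
  \<open>L\<^sub>aR\<^sub>a\<close>. Since \<open>p \<ge> 1\<close>, the coordinates of \<open>a \<in> \<ell>\<^sub>p(A\<^sub>i)\<close> are norm bounded, so these
  operators are coordinatewise dominated and map \<open>\<ell>\<^sub>p(A\<^sub>i)\<close> into itself. A coordinatewise
  operator is a band projection iff each coordinate is: one direction is pointwise, for the
  other one tests the operator on families supported at a single index. In \<open>\<ell>\<^sub>\<infinity>(A\<^sub>i)\<close> the
  family of identities has norm bounded by one, so it is the identity of the sum, and the
  conditions defining \<open>OI\<close> are again coordinatewise.\<close>

context
  fixes A :: "'a bla"
  assumes bla: "banach_lattice_algebra A"
begin

lemma bla_zero_closed: "bzero A \<in> bcar A"
  using bla by (simp add: banach_lattice_algebra_def)

lemma bla_mul_closed: "x \<in> bcar A \<Longrightarrow> y \<in> bcar A \<Longrightarrow> bmul A x y \<in> bcar A"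
  using bla by (simp add: banach_lattice_algebra_def)

lemma bla_norm_nonneg: "x \<in> bcar A \<Longrightarrow> 0 \<le> bnorm A x"
  using bla by (simp add: banach_lattice_algebra_def)

lemma bla_norm_zero: "bnorm A (bzero A) = 0"
  using bla by (simp add: banach_lattice_algebra_def)

lemma bla_norm_mul: "x \<in> bcar A \<Longrightarrow> y \<in> bcar A \<Longrightarrow> bnorm A (bmul A x y) \<le> bnorm A x * bnorm A y"
  using bla by (simp add: banach_lattice_algebra_def)

lemma bla_le_refl: "x \<in> bcar A \<Longrightarrow> ble A x x"
  using bla by (simp add: banach_lattice_algebra_def)

lemma bla_Lmul_closed: "a \<in> bcar A \<Longrightarrow> y \<in> bcar A \<Longrightarrow> Lmul A a y \<in> bcar A"
  by (simp add: Lmul_def bla_mul_closed)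

lemma bla_Rmul_closed: "a \<in> bcar A \<Longrightarrow> y \<in> bcar A \<Longrightarrow> Rmul A a y \<in> bcar A"
  by (simp add: Rmul_def bla_mul_closed)

lemma bla_norm_Lmul_le:
  assumes "a \<in> bcar A" "y \<in> bcar A" "bnorm A a \<le> C"
  shows "bnorm A (Lmul A a y) \<le> C * bnorm A y"
  using bla_norm_mul[OF assms(1,2)] mult_right_mono[OF assms(3) bla_norm_nonneg[OF assms(2)]]
  by (simp add: Lmul_def)

lemma bla_norm_Rmul_le:
  assumes "a \<in> bcar A" "y \<in> bcar A" "bnorm A a \<le> C"
  shows "bnorm A (Rmul A a y) \<le> C * bnorm A y"
  using bla_norm_mul[OF assms(2,1)] mult_left_mono[OF assms(3) bla_norm_nonneg[OF assms(2)]]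
  by (simp add: Rmul_def mult.commute)

lemma bla_norm_LRmul_le:
  assumes "a \<in> bcar A" "y \<in> bcar A" "bnorm A a \<le> C"
  shows "bnorm A (Lmul A a (Rmul A a y)) \<le> (C * C) * bnorm A y"
proof -
  have Ry: "Rmul A a y \<in> bcar A"
    using assms by (simp add: bla_Rmul_closed)
  have "bnorm A (Lmul A a (Rmul A a y)) \<le> C * bnorm A (Rmul A a y)"
    by (rule bla_norm_Lmul_le[OF assms(1) Ry assms(3)])
  also have "\<dots> \<le> C * (C * bnorm A y)"
    using bla_norm_Rmul_le[OF assms] order_trans[OF bla_norm_nonneg[OF assms(1)] assms(3)]
    by (rule mult_left_mono)
  finally show ?thesis by simp
qed

end

lemma lp_sum_simps [simp]:
  "bcar (lp_sum p I A) = lp_carrier p I A"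
  "bzero (lp_sum p I A) = (\<lambda>i. if i \<in> I then bzero (A i) else undefined)"
  "badd (lp_sum p I A) x y = (\<lambda>i. if i \<in> I then badd (A i) (x i) (y i) else undefined)"
  "bsmul (lp_sum p I A) c x = (\<lambda>i. if i \<in> I then bsmul (A i) c (x i) else undefined)"
  "ble (lp_sum p I A) x y = (\<forall>i\<in>I. ble (A i) (x i) (y i))"
  "bmul (lp_sum p I A) x y = (\<lambda>i. if i \<in> I then bmul (A i) (x i) (y i) else undefined)"
  unfolding lp_sum_def by simp_all

lemma lp_carrier_coord: "x \<in> lp_carrier p I A \<Longrightarrow> i \<in> I \<Longrightarrow> x i \<in> bcar (A i)"
  unfolding lp_carrier_def by simp

lemma lp_carrier_extensional: "x \<in> lp_carrier p I A \<Longrightarrow> i \<notin> I \<Longrightarrow> x i = undefined"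
  unfolding lp_carrier_def by simp

lemma lp_carrier_norm_bounded:
  assumes bla: "\<forall>i\<in>I. banach_lattice_algebra (A i)" and "1 \<le> p" and x: "x \<in> lp_carrier p I A"
  obtains C where "0 \<le> C" "\<forall>i\<in>I. bnorm (A i) (x i) \<le> C"
proof (cases "p = \<infinity>")
  case True
  then have "bdd_above ((\<lambda>i. bnorm (A i) (x i)) ` I)"
    using x unfolding lp_carrier_def by simp
  then obtain M where "\<forall>i\<in>I. bnorm (A i) (x i) \<le> M"
    unfolding bdd_above_def by blast
  then show ?thesis
    using that[of "max 0 M"] by (meson max.cobounded1 max.coboundedI2)
next
  case False
  define q where "q = enn2real p"
  have "1 \<le> q"
    using \<open>1 \<le> p\<close> False enn2real_mono[of 1 p] by (simp add: q_def top.not_eq_extremum)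
  define f where "f i = bnorm (A i) (x i) powr q" for i
  have "f summable_on I"
    using x False unfolding lp_carrier_def f_def q_def by simp
  have "bnorm (A i) (x i) \<le> max 1 (infsum f I)" if i: "i \<in> I" for i
  proof (cases "bnorm (A i) (x i) \<le> 1")
    case False
    have "infsum f {i} \<le> infsum f I"
      using \<open>f summable_on I\<close> i by (intro infsum_mono_neutral) (auto simp: f_def)
    moreover have "bnorm (A i) (x i) powr 1 \<le> f i"
      unfolding f_def using False \<open>1 \<le> q\<close> by (intro powr_mono) auto
    ultimately show ?thesis
      using bla_norm_nonneg[of "A i" "x i"] bla lp_carrier_coord[OF x i] i by simp
  qed simp
  then show ?thesis
    using that[of "max 1 (infsum f I)"] by simp
qed

lemma lp_carrier_dominated:
  assumes bla: "\<forall>i\<in>I. banach_lattice_algebra (A i)" and x: "x \<in> lp_carrier p I A"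
    and y: "\<forall>i\<in>I. y i \<in> bcar (A i)" "\<forall>i. i \<notin> I \<longrightarrow> y i = undefined"
    and bound: "\<forall>i\<in>I. bnorm (A i) (y i) \<le> C * bnorm (A i) (x i)" and "0 \<le> C"
  shows "y \<in> lp_carrier p I A"
proof (cases "p = \<infinity>")
  case True
  then have "bdd_above ((\<lambda>i. bnorm (A i) (x i)) ` I)"
    using x unfolding lp_carrier_def by simp
  then obtain M where M: "\<forall>i\<in>I. bnorm (A i) (x i) \<le> M"
    unfolding bdd_above_def by blast
  have "\<forall>i\<in>I. bnorm (A i) (y i) \<le> C * M"
    using bound M \<open>0 \<le> C\<close> by (meson mult_left_mono order_trans)
  then have "bdd_above ((\<lambda>i. bnorm (A i) (y i)) ` I)"
    unfolding bdd_above_def by blast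
  then show ?thesis
    using True y unfolding lp_carrier_def by simp
next
  case False
  define q where "q = enn2real p"
  have "(\<lambda>i. bnorm (A i) (x i) powr q) summable_on I"
    using x False unfolding lp_carrier_def q_def by simp
  then have "(\<lambda>i. C powr q * bnorm (A i) (x i) powr q) summable_on I"
    by (rule summable_on_cmult_right)
  then have "(\<lambda>i. bnorm (A i) (y i) powr q) summable_on I"
  proof (rule summable_on_comparison_test)
    fix i assume i: "i \<in> I"
    have nonneg: "0 \<le> bnorm (A i) (x i)" "0 \<le> bnorm (A i) (y i)"
      using bla i lp_carrier_coord[OF x i] y by (simp_all add: bla_norm_nonneg)
    have "bnorm (A i) (y i) powr q \<le> (C * bnorm (A i) (x i)) powr q"
      using bound i nonneg by (intro powr_mono2) (auto simp: q_def)
    also have "\<dots> = C powr q * bnorm (A i) (x i) powr q"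
      using \<open>0 \<le> C\<close> nonneg by (simp add: powr_mult)
    finally show "bnorm (A i) (y i) powr q \<le> C powr q * bnorm (A i) (x i) powr q" .
  qed simp
  then show ?thesis
    using False y unfolding lp_carrier_def q_def by simp
qed

definition coordwise :: "'i set \<Rightarrow> ('i \<Rightarrow> 'a \<Rightarrow> 'a) \<Rightarrow> ('i \<Rightarrow> 'a) \<Rightarrow> 'i \<Rightarrow> 'a" where
  "coordwise I F x = (\<lambda>i. if i \<in> I then F i (x i) else undefined)"

definition lp_single :: "'i set \<Rightarrow> ('i \<Rightarrow> 'a bla) \<Rightarrow> 'i \<Rightarrow> 'a \<Rightarrow> 'i \<Rightarrow> 'a" where
  "lp_single I A i y = (\<lambda>j. if j = i then y else if j \<in> I then bzero (A j) else undefined)"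

lemma coordwise_in_lp_carrier:
  assumes bla: "\<forall>i\<in>I. banach_lattice_algebra (A i)"
    and F: "\<forall>i\<in>I. \<forall>y\<in>bcar (A i). F i y \<in> bcar (A i) \<and> bnorm (A i) (F i y) \<le> C * bnorm (A i) y"
    and "0 \<le> C" and x: "x \<in> lp_carrier p I A"
  shows "coordwise I F x \<in> lp_carrier p I A"
  using lp_carrier_dominated[OF bla x _ _ _ \<open>0 \<le> C\<close>] F lp_carrier_coord[OF x]
  by (simp add: coordwise_def)

lemma lp_single_in_lp_carrier:
  assumes bla: "\<forall>i\<in>I. banach_lattice_algebra (A i)" and "i \<in> I" "y \<in> bcar (A i)"
  shows "lp_single I A i y \<in> lp_carrier p I A"
proof -
  let ?n = "\<lambda>j. bnorm (A j) (lp_single I A i y j)"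
  have zero: "?n j = 0" if "j \<in> I - {i}" for j
    using bla that by (simp add: lp_single_def bla_norm_zero)
  have "(\<lambda>j. ?n j powr enn2real p) summable_on I \<longleftrightarrow> (\<lambda>j. ?n j powr enn2real p) summable_on {i}"
    using zero \<open>i \<in> I\<close> by (intro summable_on_cong_neutral) auto
  moreover have "?n ` I \<subseteq> {bnorm (A i) y, 0}"
    using zero by (auto simp: lp_single_def)
  then have "bdd_above (?n ` I)"
    by (rule bdd_above_mono[rotated]) simp
  ultimately show ?thesis
    using assms by (auto simp: lp_carrier_def lp_single_def bla_zero_closed)
qed

lemma band_projection_coord_if_coordwise:
  assumes bla: "\<forall>i\<in>I. banach_lattice_algebra (A i)"
    and P: "band_projection (lp_sum p I A) (coordwise I F)"
    and i: "i \<in> I" and F: "\<forall>y\<in>bcar (A i). F i y \<in> bcar (A i)"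
  shows "band_projection (A i) (F i)"
proof -
  let ?L = "lp_sum p I A" and ?e = "lp_single I A i"
  have e: "?e y \<in> lp_carrier p I A" if "y \<in> bcar (A i)" for y
    using lp_single_in_lp_carrier[OF bla i that] .
  have at_i: "?e y i = y" "coordwise I F (?e y) i = F i y" for y
    using i by (simp_all add: lp_single_def coordwise_def)
  have add: "coordwise I F (badd ?L u v) = badd ?L (coordwise I F u) (coordwise I F v)"
    and smul: "coordwise I F (bsmul ?L c u) = bsmul ?L c (coordwise I F u)"
    and idem: "coordwise I F (coordwise I F u) = coordwise I F u"
    if "u \<in> lp_carrier p I A" "v \<in> lp_carrier p I A" for u v c
    using P that unfolding band_projection_def lp_sum_simps(1) by blast+
  have pos: "ble ?L (bzero ?L) (coordwise I F u) \<and> ble ?L (coordwise I F u) u"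
    if "u \<in> lp_carrier p I A" "ble ?L (bzero ?L) u" for u
    using P that unfolding band_projection_def lp_sum_simps(1) by blast
  show ?thesis
    unfolding band_projection_def
  proof (intro conjI ballI allI impI)
    fix x y assume x: "x \<in> bcar (A i)" and y: "y \<in> bcar (A i)"
    have "F i (badd (A i) x y) = coordwise I F (badd ?L (?e x) (?e y)) i"
      using i by (simp add: at_i coordwise_def)
    also have "\<dots> = badd (A i) (F i x) (F i y)"
      using i by (simp only: add[OF e[OF x] e[OF y]]) (simp add: at_i)
    finally show "F i (badd (A i) x y) = badd (A i) (F i x) (F i y)" .
  next
    fix x c assume x: "x \<in> bcar (A i)"
    have "F i (bsmul (A i) c x) = coordwise I F (bsmul ?L c (?e x)) i"
      using i by (simp add: at_i coordwise_def)
    also have "\<dots> = bsmul (A i) c (F i x)"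
      using i by (simp only: smul[OF e[OF x] e[OF x]]) (simp add: at_i)
    finally show "F i (bsmul (A i) c x) = bsmul (A i) c (F i x)" .
  next
    fix x assume x: "x \<in> bcar (A i)"
    have "F i (F i x) = coordwise I F (coordwise I F (?e x)) i"
      using i by (simp add: at_i coordwise_def)
    also have "\<dots> = F i x"
      by (simp only: idem[OF e[OF x] e[OF x]] at_i)
    finally show "F i (F i x) = F i x" .
  next
    fix x assume x: "x \<in> bcar (A i)" "ble (A i) (bzero (A i)) x"
    have "ble ?L (bzero ?L) (?e x)"
      using bla x by (simp add: lp_single_def bla_le_refl bla_zero_closed)
    then have "ble (A i) (bzero (A i)) (coordwise I F (?e x) i) \<and>
        ble (A i) (coordwise I F (?e x) i) (?e x i)"
      using pos[OF e[OF x(1)]] i by simp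
    then show "ble (A i) (bzero (A i)) (F i x)" "ble (A i) (F i x) x"
      by (simp_all add: at_i)
  qed (use F in blast)
qed

lemma band_projection_coordwise_iff:
  assumes bla: "\<forall>i\<in>I. banach_lattice_algebra (A i)"
    and F: "\<forall>i\<in>I. \<forall>y\<in>bcar (A i). F i y \<in> bcar (A i) \<and> bnorm (A i) (F i y) \<le> C * bnorm (A i) y"
    and "0 \<le> C"
  shows "band_projection (lp_sum p I A) (coordwise I F) \<longleftrightarrow> (\<forall>i\<in>I. band_projection (A i) (F i))"
proof
  show "\<forall>i\<in>I. band_projection (A i) (F i)" if "band_projection (lp_sum p I A) (coordwise I F)"
    using band_projection_coord_if_coordwise[OF bla that] F by blast
next
  assume "\<forall>i\<in>I. band_projection (A i) (F i)"
  then show "band_projection (lp_sum p I A) (coordwise I F)"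
    using coordwise_in_lp_carrier[OF bla F \<open>0 \<le> C\<close>] lp_carrier_coord[of _ p I A]
    unfolding band_projection_def by (auto simp: coordwise_def)
qed

lemma Lmul_lp_sum: "Lmul (lp_sum p I A) a = coordwise I (\<lambda>i. Lmul (A i) (a i))"
  by (auto simp: Lmul_def coordwise_def)

lemma Rmul_lp_sum: "Rmul (lp_sum p I A) a = coordwise I (\<lambda>i. Rmul (A i) (a i))"
  by (auto simp: Rmul_def coordwise_def)

lemma LRmul_lp_sum:
  "Lmul (lp_sum p I A) a \<circ> Rmul (lp_sum p I A) a = coordwise I (\<lambda>i. Lmul (A i) (a i) \<circ> Rmul (A i) (a i))"
  by (auto simp: Lmul_def Rmul_def coordwise_def fun_eq_iff)

lemma positives_lp_sum:
  "x \<in> lp_carrier p I A \<Longrightarrow> x \<in> positives (lp_sum p I A) \<longleftrightarrow> (\<forall>i\<in>I. x i \<in> positives (A i))"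
  by (auto simp: positives_def lp_carrier_coord)

context
  fixes I :: "'i set" and A :: "'i \<Rightarrow> 'a bla" and p :: ennreal and a :: "'i \<Rightarrow> 'a"
  assumes bla: "\<forall>i\<in>I. banach_lattice_algebra (A i)" and "1 \<le> p" and a: "a \<in> lp_carrier p I A"
begin

lemma BPl_lp_sum: "a \<in> BPl (lp_sum p I A) \<longleftrightarrow> (\<forall>i\<in>I. a i \<in> BPl (A i))"
proof -
  obtain C where "0 \<le> C" "\<forall>i\<in>I. bnorm (A i) (a i) \<le> C"
    using lp_carrier_norm_bounded[OF bla \<open>1 \<le> p\<close> a] .
  then have "band_projection (lp_sum p I A) (Lmul (lp_sum p I A) a)
      \<longleftrightarrow> (\<forall>i\<in>I. band_projection (A i) (Lmul (A i) (a i)))"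
    unfolding Lmul_lp_sum using bla lp_carrier_coord[OF a]
    by (intro band_projection_coordwise_iff)
       (auto simp: bla_norm_Lmul_le bla_Lmul_closed)
  then show ?thesis
    using positives_lp_sum[OF a] by (auto simp: BPl_def)
qed

lemma BPr_lp_sum: "a \<in> BPr (lp_sum p I A) \<longleftrightarrow> (\<forall>i\<in>I. a i \<in> BPr (A i))"
proof -
  obtain C where "0 \<le> C" "\<forall>i\<in>I. bnorm (A i) (a i) \<le> C"
    using lp_carrier_norm_bounded[OF bla \<open>1 \<le> p\<close> a] .
  then have "band_projection (lp_sum p I A) (Rmul (lp_sum p I A) a)
      \<longleftrightarrow> (\<forall>i\<in>I. band_projection (A i) (Rmul (A i) (a i)))"
    unfolding Rmul_lp_sum using bla lp_carrier_coord[OF a]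
    by (intro band_projection_coordwise_iff)
       (auto simp: bla_norm_Rmul_le bla_Rmul_closed)
  then show ?thesis
    using positives_lp_sum[OF a] by (auto simp: BPr_def)
qed

lemma BP_lp_sum: "a \<in> BP (lp_sum p I A) \<longleftrightarrow> (\<forall>i\<in>I. a i \<in> BP (A i))"
proof -
  obtain C where "0 \<le> C" "\<forall>i\<in>I. bnorm (A i) (a i) \<le> C"
    using lp_carrier_norm_bounded[OF bla \<open>1 \<le> p\<close> a] .
  then have "band_projection (lp_sum p I A) (Lmul (lp_sum p I A) a \<circ> Rmul (lp_sum p I A) a)
      \<longleftrightarrow> (\<forall>i\<in>I. band_projection (A i) (Lmul (A i) (a i) \<circ> Rmul (A i) (a i)))"
    unfolding LRmul_lp_sum using bla lp_carrier_coord[OF a]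
    by (intro band_projection_coordwise_iff[where C = "C * C"])
       (auto simp: bla_norm_LRmul_le bla_Lmul_closed bla_Rmul_closed)
  then show ?thesis
    using positives_lp_sum[OF a] by (auto simp: BP_def)
qed

end

lemma is_identity_unique: "is_identity A e \<Longrightarrow> is_identity A e' \<Longrightarrow> e = e'"
  unfolding is_identity_def by metis

lemma bla_one_eq: "is_identity A e \<Longrightarrow> bla_one A = e"
  unfolding bla_one_def by (rule the_equality) (auto intro: is_identity_unique)

lemma is_identity_lp_sum:
  assumes "e \<in> lp_carrier p I A" "\<forall>i\<in>I. is_identity (A i) (e i)"
  shows "is_identity (lp_sum p I A) e"
  unfolding is_identity_def
proof (intro conjI ballI)
  fix x assume "x \<in> bcar (lp_sum p I A)"
  then have x: "x \<in> lp_carrier p I A" by simp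
  show "bmul (lp_sum p I A) e x = x" "bmul (lp_sum p I A) x e = x"
    using assms(2) lp_carrier_coord[OF x] lp_carrier_extensional[OF x]
    by (auto simp: is_identity_def fun_eq_iff)
qed (use assms(1) in simp)

lemma lp_sum_mul_idem_iff:
  "x \<in> lp_carrier p I A \<Longrightarrow>
    bmul (lp_sum p I A) x x = x \<longleftrightarrow> (\<forall>i\<in>I. bmul (A i) (x i) (x i) = x i)"
  using lp_carrier_extensional[of x p I A] by (auto simp: fun_eq_iff)

lemma OI_lp_sum_infinity:
  assumes "\<forall>i\<in>I. has_identity (A i)"
  shows "OI (lp_sum \<infinity> I A) = {x \<in> lp_carrier \<infinity> I A. \<forall>i\<in>I. x i \<in> OI (A i)}"
proof -
  define E where "E = restrict (\<lambda>i. bla_one (A i)) I"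
  have E: "is_identity (A i) (E i) \<and> bnorm (A i) (E i) = 1" if i: "i \<in> I" for i
  proof -
    obtain e where "is_identity (A i) e" "bnorm (A i) e = 1"
      using assms i unfolding has_identity_def by blast
    then show ?thesis
      using i by (simp add: E_def bla_one_eq)
  qed
  then have "bdd_above ((\<lambda>i. bnorm (A i) (E i)) ` I)"
    by (intro bdd_aboveI[where M = 1]) auto
  then have "E \<in> lp_carrier \<infinity> I A"
    using E by (simp add: lp_carrier_def is_identity_def E_def)
  then have one: "bla_one (lp_sum \<infinity> I A) = E"
    using E by (simp add: is_identity_lp_sum bla_one_eq)
  have "x \<in> OI (lp_sum \<infinity> I A) \<longleftrightarrow> (\<forall>i\<in>I. x i \<in> OI (A i))"
    if x: "x \<in> lp_carrier \<infinity> I A" for x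
    unfolding OI_def mem_Collect_eq one lp_sum_mul_idem_iff[OF x]
    using x by (auto simp: E_def lp_carrier_coord)
  then show ?thesis
    unfolding OI_def[of "lp_sum \<infinity> I A"] by auto
qed

theorem mainTheorem19:
  fixes I :: "'i set" and A :: "'i \<Rightarrow> 'a bla" and p :: ennreal
  assumes "\<forall>i\<in>I. banach_lattice_algebra (A i)"
    and "1 \<le> p"
  shows "(\<forall>x\<in>bcar (lp_sum p I A).
            (x \<in> BP (lp_sum p I A) \<longleftrightarrow> (\<forall>i\<in>I. x i \<in> BP (A i))) \<and>
            (x \<in> BPl (lp_sum p I A) \<longleftrightarrow> (\<forall>i\<in>I. x i \<in> BPl (A i))) \<and>
            (x \<in> BPr (lp_sum p I A) \<longleftrightarrow> (\<forall>i\<in>I. x i \<in> BPr (A i)))) \<and>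
         ((\<forall>i\<in>I. has_identity (A i)) \<longrightarrow>
            OI (lp_sum \<infinity> I A) = {x \<in> bcar (lp_sum \<infinity> I A). \<forall>i\<in>I. x i \<in> OI (A i)})"
  using BP_lp_sum[OF assms] BPl_lp_sum[OF assms] BPr_lp_sum[OF assms] OI_lp_sum_infinity[of I A]
  by simp

end
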